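(* Let $F$ be a semi-flow on a connected metrizable space $X$ and let $\{S_\alpha\}$ be a collection of $F$-$\Omega$streams. Then: (1) $S_\cap=\bigcap_\alpha S_\alpha$ is an $F$-$\Omega$stream; (2) $\mathcal{R}_{S_\cap}=\bigcap_\alpha\mathcal{R}_{S_\alpha}$; (3) for every node $N$ of $S_\cap$, if $N_\alpha$ denotes the node of $S_\alpha$ containing $N$, then $N=\bigcap_\alpha N_\alpha$.
   Context: A semi-flow on $X$ is a continuous map $F:\mathbb{T}\times X\to X$, $(t,x)\mapsto F^t(x)$, where $\mathbb{T}=\{0,1,2,\dots\}$ or $[0,\infty)$, with $F^0=\mathrm{id}$ and $F^{t_1+t_2}=F^{t_2}\circ F^{t_1}$. Put $\mathcal{O}_F(x)=\{F^t(x)\}$ and $\mathcal{O}_F=\{(x,y):y\in\mathcal{O}_F(x)\}$. An $F$-stream is a reflexive, transitive relation $S$ that is closed in $X\times X$ and contains $\mathcal{O}_F$; write $x\succcurlyeq_S y$ for $(x,y)\in S$ and $\mathrm{Down}_S(x)=\{y:x\succcurlyeq_S y\}$. $S$ is an $\Omega$stream if $\mathrm{Down}_S(x)=\mathcal{O}_F(x)\cup\mathrm{Down}_S(y)$ for every $x$ and every $y\in\mathcal{O}_F(x)$. Write $x\overset{S}{=}y$ if $x\succcurlyeq_S y$ and $y\succcurlyeq_S x$. A point $x$ is $S$-recurrent if $\mathcal{O}_F(x)=\{x\}$ or there is $y\ne x$ with $x\overset{S}{=}y$, and $\mathcal{R}_S$ is the set of such points. The nodes of $S$ are the $\overset{S}{=}$-equivalence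 classes of $\mathcal{R}_S$. *)

theory Defs
  imports "HOL-Analysis.Analysis"
begin

text \<open>Time domain: T is either the set of naturals (embedded in the reals)
  or [0,\<infinity>). A semi-flow is F :: real \<Rightarrow> 'a \<Rightarrow> 'a, of which only the values on T matter.\<close>

definition semiflow :: "real set \<Rightarrow> (real \<Rightarrow> 'a::topological_space \<Rightarrow> 'a) \<Rightarrow> bool" where
  "semiflow T F \<longleftrightarrow> (T = range real \<or> T = {0..}) \<and>
     continuous_on (T \<times> UNIV) (\<lambda>(t, x). F t x) \<and>
     (\<forall>x. F 0 x = x) \<and>
     (\<forall>t1\<in>T. \<forall>t2\<in>T. \<forall>x. F (t1 + t2) x = F t2 (F t1 x))"

definition orbit :: "real set \<Rightarrow> (real \<Rightarrow> 'a \<Rightarrow> 'a) \<Rightarrow> 'a \<Rightarrow> 'a set" where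
  "orbit T F x = {F t x | t. t \<in> T}"

definition orbit_rel :: "real set \<Rightarrow> (real \<Rightarrow> 'a \<Rightarrow> 'a) \<Rightarrow> ('a \<times> 'a) set" where
  "orbit_rel T F = {(x, y). y \<in> orbit T F x}"

definition is_stream :: "real set \<Rightarrow> (real \<Rightarrow> 'a::topological_space \<Rightarrow> 'a) \<Rightarrow> ('a \<times> 'a) set \<Rightarrow> bool" where
  "is_stream T F S \<longleftrightarrow> refl S \<and> trans S \<and> closed S \<and> orbit_rel T F \<subseteq> S"

definition down :: "('a \<times> 'a) set \<Rightarrow> 'a \<Rightarrow> 'a set" where
  "down S x = {y. (x, y) \<in> S}"

definition is_omega_stream :: "real set \<Rightarrow> (real \<Rightarrow> 'a::topological_space \<Rightarrow> 'a) \<Rightarrow> ('a \<times> 'a) set \<Rightarrow> bool" where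
  "is_omega_stream T F S \<longleftrightarrow> is_stream T F S \<and>
     (\<forall>x. \<forall>y\<in>orbit T F x. down S x = orbit T F x \<union> down S y)"

definition stream_eq :: "('a \<times> 'a) set \<Rightarrow> 'a \<Rightarrow> 'a \<Rightarrow> bool" where
  "stream_eq S x y \<longleftrightarrow> (x, y) \<in> S \<and> (y, x) \<in> S"

definition recurrent :: "real set \<Rightarrow> (real \<Rightarrow> 'a \<Rightarrow> 'a) \<Rightarrow> ('a \<times> 'a) set \<Rightarrow> 'a set" where
  "recurrent T F S = {x. orbit T F x = {x} \<or> (\<exists>y. y \<noteq> x \<and> stream_eq S x y)}"

definition nodes :: "real set \<Rightarrow> (real \<Rightarrow> 'a \<Rightarrow> 'a) \<Rightarrow> ('a \<times> 'a) set \<Rightarrow> 'a set set" where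
  "nodes T F S = {{y \<in> recurrent T F S. stream_eq S x y} | x. x \<in> recurrent T F S}"

end

theory Submission
  imports Defs
begin

text \<open>
  Only part (2) has content. In an \<Omega>stream S, a recurrent point x is S-equivalent to every point
  of its orbit. Indeed, if x and y \<noteq> x are S-equivalent, the \<Omega>-property applied to
  y \<in> Down(x) gives either F^t x \<succcurlyeq> y \<succcurlyeq> x, or y = F^s x with s > 0. In the
  latter case, applying the \<Omega>-property along the multiples of s shows that F^(ks) x \<succcurlyeq> x
  for all k unless x is periodic; either way arbitrarily late orbit points lead back to x, and
  so do all earlier ones. Hence a point recurrent for every S_\<alpha> whose orbit contains some
  z \<noteq> x is equivalent to z in every S_\<alpha>, so it is recurrent for the intersection.
  Parts (1) and (3) are bookkeeping.
\<close>

lemma semiflow_time_domain: "semiflow T F \<Longrightarrow> T = range real \<or> T = {0..}"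
  by (simp add: semiflow_def)

lemma semiflow_zero_time: "semiflow T F \<Longrightarrow> 0 \<in> T"
  using semiflow_time_domain by (metis atLeast_iff order_refl of_nat_0 rangeI)

lemma semiflow_time_nonneg: "semiflow T F \<Longrightarrow> t \<in> T \<Longrightarrow> 0 \<le> t"
  using semiflow_time_domain by fastforce

lemma semiflow_time_add: "semiflow T F \<Longrightarrow> a \<in> T \<Longrightarrow> b \<in> T \<Longrightarrow> a + b \<in> T"
  using semiflow_time_domain
  by (metis (no_types, lifting) add_nonneg_nonneg atLeast_iff image_iff of_nat_add rangeI)

lemma semiflow_time_diff:
  assumes "semiflow T F" "a \<in> T" "b \<in> T" "b \<le> a"
  shows "a - b \<in> T"
  using semiflow_time_domain[OF assms(1)]
proof
  assume T: "T = range real"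
  with assms obtain n m where "a = real n" "b = real m" by auto
  with \<open>b \<le> a\<close> have "a - b = real (n - m)" by (simp add: of_nat_diff)
  with T show ?thesis by simp
qed (use assms in auto)

lemma semiflow_time_of_nat_mult:
  assumes "semiflow T F" "s \<in> T"
  shows "real k * s \<in> T"
  using semiflow_time_domain[OF assms(1)]
proof
  assume T: "T = range real"
  with assms obtain n where "s = real n" by auto
  then have "real k * s = real (k * n)" by simp
  with T show ?thesis by (metis rangeI)
qed (use assms in auto)

lemma semiflow_zero: "semiflow T F \<Longrightarrow> F 0 x = x"
  by (simp add: semiflow_def)

lemma semiflow_add: "semiflow T F \<Longrightarrow> a \<in> T \<Longrightarrow> b \<in> T \<Longrightarrow> F (a + b) x = F b (F a x)"
  by (simp add: semiflow_def)

lemma semiflow_periodic_of_nat_mult: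
  assumes sf: "semiflow T F" and "p \<in> T" "F p x = x"
  shows "F (real m * p) x = x"
proof (induction m)
  case 0
  show ?case using semiflow_zero[OF sf] by simp
next
  case (Suc m)
  have "F (real m * p + p) x = F p (F (real m * p) x)"
    using semiflow_add[OF sf semiflow_time_of_nat_mult[OF sf \<open>p \<in> T\<close>] \<open>p \<in> T\<close>] .
  then show ?case using Suc \<open>F p x = x\<close> by (simp add: algebra_simps)
qed

lemma in_orbitI: "t \<in> T \<Longrightarrow> F t x \<in> orbit T F x"
  by (auto simp: orbit_def)

lemma self_in_orbit: "semiflow T F \<Longrightarrow> x \<in> orbit T F x"
  using in_orbitI[OF semiflow_zero_time] semiflow_zero by metis

lemma orbit_rel_later:
  assumes sf: "semiflow T F" and "t \<in> T" "q \<in> T" "t \<le> q"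
  shows "(F t x, F q x) \<in> orbit_rel T F"
proof -
  have d: "q - t \<in> T" using semiflow_time_diff[OF sf] assms by auto
  have "F q x = F (q - t) (F t x)" using semiflow_add[OF sf \<open>t \<in> T\<close> d, of x] by simp
  with d show ?thesis by (auto simp: orbit_rel_def orbit_def)
qed

lemma stream_returns_if_multiples_return:
  assumes sf: "semiflow T F" and st: "is_stream T F S"
    and p: "p \<in> T" "p > 0" and ret: "\<And>k::nat. (F (real k * p) x, x) \<in> S"
    and "t \<in> T"
  shows "(F t x, x) \<in> S"
proof -
  obtain k :: nat where "t / p \<le> real k" using real_arch_simple by blast
  with \<open>p > 0\<close> have "t \<le> real k * p" by (simp add: field_simps)
  then have "(F t x, F (real k * p) x) \<in> S"
    using orbit_rel_later[OF sf \<open>t \<in> T\<close> semiflow_time_of_nat_mult[OF sf p(1)]] st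
    by (auto simp: is_stream_def)
  with ret[of k] st show ?thesis by (auto simp: is_stream_def dest: transD)
qed

lemma omega_stream_reach:
  assumes "is_omega_stream T F S" "(x, z) \<in> S" "t \<in> T"
  shows "z \<in> orbit T F x \<or> (F t x, z) \<in> S"
proof -
  have "down S x = orbit T F x \<union> down S (F t x)"
    using assms(1) in_orbitI[OF assms(3), of F x] unfolding is_omega_stream_def by blast
  with assms(2) show ?thesis by (auto simp: down_def)
qed

lemma omega_stream_multiples_return:
  assumes sf: "semiflow T F" and om: "is_omega_stream T F S"
    and s: "s \<in> T" "s > 0" and ret: "(F s x, x) \<in> S"
  shows "(F (real k * s) x, x) \<in> S \<or> (\<exists>p\<in>T. p > 0 \<and> F p x = x)"
proof (induction k)
  case 0
  show ?case using om semiflow_zero[OF sf]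
    by (auto simp: is_omega_stream_def is_stream_def refl_on_def)
next
  case (Suc k)
  let ?u = "F (real k * s) x"
  have kT: "real k * s \<in> T" using semiflow_time_of_nat_mult[OF sf s(1)] .
  show ?case
  proof (cases "(?u, x) \<in> S")
    case True
    then consider "x \<in> orbit T F ?u" | "(F s ?u, x) \<in> S"
      using omega_stream_reach[OF om _ s(1)] by blast
    then show ?thesis
    proof cases
      case 1
      then obtain r where rT: "r \<in> T" and "x = F r ?u" by (auto simp: orbit_def)
      then have periodic: "F (real k * s + r) x = x" using semiflow_add[OF sf kT rT] by simp
      show ?thesis
      proof (cases "k = 0")
        case True
        with ret show ?thesis by simp
      next
        case False
        with s(2) have "real k * s > 0" by simp
        with semiflow_time_nonneg[OF sf rT] have "real k * s + r > 0" by linarith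
        with periodic semiflow_time_add[OF sf kT rT] show ?thesis by blast
      qed
    next
      case 2
      moreover have "F s ?u = F (real (Suc k) * s) x"
        using semiflow_add[OF sf kT s(1), of x] by (simp add: algebra_simps)
      ultimately show ?thesis by simp
    qed
  qed (use Suc in blast)
qed

lemma omega_stream_returns_along_orbit:
  assumes sf: "semiflow T F" and om: "is_omega_stream T F S"
    and "(x, y) \<in> S" "(y, x) \<in> S" "y \<noteq> x" and "t \<in> T"
  shows "(F t x, x) \<in> S"
proof -
  have st: "is_stream T F S" using om by (simp add: is_omega_stream_def)
  consider "y \<in> orbit T F x" | "(F t x, y) \<in> S"
    using omega_stream_reach[OF om \<open>(x, y) \<in> S\<close> \<open>t \<in> T\<close>] by blast
  then show ?thesis
  proof cases
    case 1
    then obtain s where s: "s \<in> T" and y: "y = F s x" by (auto simp: orbit_def)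
    with \<open>y \<noteq> x\<close> semiflow_zero[OF sf] have "s \<noteq> 0" by auto
    with semiflow_time_nonneg[OF sf s] have "s > 0" by simp
    obtain p where "p \<in> T" "p > 0" "\<And>k::nat. (F (real k * p) x, x) \<in> S"
    proof (cases "\<exists>p\<in>T. p > 0 \<and> F p x = x")
      case True
      then obtain p where "p \<in> T" "p > 0" "F p x = x" by blast
      with semiflow_periodic_of_nat_mult[OF sf] st show ?thesis
        by (intro that[of p]) (auto simp: is_stream_def refl_on_def)
    next
      case False
      with omega_stream_multiples_return[OF sf om s \<open>s > 0\<close>] \<open>(y, x) \<in> S\<close> y show ?thesis
        by (intro that[of s]) (auto simp: s \<open>s > 0\<close>)
    qed
    then show ?thesis using stream_returns_if_multiples_return[OF sf st] \<open>t \<in> T\<close> by blast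
  next
    case 2
    with \<open>(y, x) \<in> S\<close> st show ?thesis by (auto simp: is_stream_def dest: transD)
  qed
qed

lemma recurrent_stream_eq_orbit:
  assumes sf: "semiflow T F" and om: "is_omega_stream T F S"
    and x: "x \<in> recurrent T F S" and z: "z \<in> orbit T F x"
  shows "stream_eq S x z"
proof (cases "orbit T F x = {x}")
  case True
  with z om show ?thesis
    by (auto simp: stream_eq_def is_omega_stream_def is_stream_def refl_on_def)
next
  case False
  with x obtain y where "y \<noteq> x" "stream_eq S x y" by (auto simp: recurrent_def)
  moreover obtain t where "t \<in> T" "z = F t x" using z by (auto simp: orbit_def)
  moreover have "(x, z) \<in> S"
    using z om by (auto simp: orbit_rel_def is_omega_stream_def is_stream_def)
  ultimately show ?thesis
    using omega_stream_returns_along_orbit[OF sf om] by (auto simp: stream_eq_def)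
qed

lemma is_omega_stream_INT:
  assumes "\<forall>\<alpha>\<in>I. is_omega_stream T F (S \<alpha>)"
  shows "is_omega_stream T F (\<Inter>\<alpha>\<in>I. S \<alpha>)"
proof -
  have st: "\<And>\<alpha>. \<alpha> \<in> I \<Longrightarrow> refl (S \<alpha>) \<and> trans (S \<alpha>) \<and> closed (S \<alpha>) \<and> orbit_rel T F \<subseteq> S \<alpha>"
    and down: "\<And>\<alpha> u v. \<alpha> \<in> I \<Longrightarrow> v \<in> orbit T F u \<Longrightarrow> down (S \<alpha>) u = orbit T F u \<union> down (S \<alpha>) v"
    using assms by (simp_all add: is_omega_stream_def is_stream_def)
  have "is_stream T F (\<Inter>\<alpha>\<in>I. S \<alpha>)"
    unfolding is_stream_def using st
    by (auto simp: refl_on_def trans_def intro!: closed_INT)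
  moreover have "down (\<Inter>\<alpha>\<in>I. S \<alpha>) u = orbit T F u \<union> down (\<Inter>\<alpha>\<in>I. S \<alpha>) v"
    if "v \<in> orbit T F u" for u v
    using down[OF _ that] unfolding down_def by blast
  ultimately show ?thesis by (simp add: is_omega_stream_def)
qed

lemma stream_eq_INT: "stream_eq (\<Inter>\<alpha>\<in>I. S \<alpha>) x y \<longleftrightarrow> (\<forall>\<alpha>\<in>I. stream_eq (S \<alpha>) x y)"
  by (auto simp: stream_eq_def)

lemma recurrent_mono: "S \<subseteq> S' \<Longrightarrow> recurrent T F S \<subseteq> recurrent T F S'"
  by (auto simp: recurrent_def stream_eq_def)

lemma recurrent_INT:
  assumes sf: "semiflow T F" and om: "\<forall>\<alpha>\<in>I. is_omega_stream T F (S \<alpha>)"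
  shows "recurrent T F (\<Inter>\<alpha>\<in>I. S \<alpha>) = (\<Inter>\<alpha>\<in>I. recurrent T F (S \<alpha>))"
proof
  show "recurrent T F (\<Inter>\<alpha>\<in>I. S \<alpha>) \<subseteq> (\<Inter>\<alpha>\<in>I. recurrent T F (S \<alpha>))"
    by (intro INT_greatest recurrent_mono INT_lower)
  show "(\<Inter>\<alpha>\<in>I. recurrent T F (S \<alpha>)) \<subseteq> recurrent T F (\<Inter>\<alpha>\<in>I. S \<alpha>)"
  proof
    fix x assume x: "x \<in> (\<Inter>\<alpha>\<in>I. recurrent T F (S \<alpha>))"
    show "x \<in> recurrent T F (\<Inter>\<alpha>\<in>I. S \<alpha>)"
    proof (cases "orbit T F x = {x}")
      case False
      with self_in_orbit[OF sf] obtain z where z: "z \<in> orbit T F x" "z \<noteq> x" by blast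
      have "stream_eq (S \<alpha>) x z" if "\<alpha> \<in> I" for \<alpha>
        using recurrent_stream_eq_orbit[OF sf _ _ z(1)] x om that by blast
      then have "stream_eq (\<Inter>\<alpha>\<in>I. S \<alpha>) x z" by (simp add: stream_eq_INT)
      with z show ?thesis unfolding recurrent_def by blast
    qed (simp add: recurrent_def)
  qed
qed

definition node :: "real set \<Rightarrow> (real \<Rightarrow> 'a \<Rightarrow> 'a) \<Rightarrow> ('a \<times> 'a) set \<Rightarrow> 'a \<Rightarrow> 'a set" where
  "node T F S x = {y \<in> recurrent T F S. stream_eq S x y}"

lemma nodes_eq_image: "nodes T F S = node T F S ` recurrent T F S"
  by (auto simp: nodes_def node_def)

lemma self_in_node: "refl S \<Longrightarrow> x \<in> recurrent T F S \<Longrightarrow> x \<in> node T F S x"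
  by (auto simp: node_def stream_eq_def refl_on_def)

lemma nodes_eq_node:
  assumes "trans S" "M \<in> nodes T F S" "x \<in> M"
  shows "M = node T F S x"
proof -
  obtain a where M: "M = node T F S a" using assms(2) by (auto simp: nodes_eq_image)
  with assms(3) have "(a, x) \<in> S" "(x, a) \<in> S" by (simp_all add: node_def stream_eq_def)
  with \<open>trans S\<close> have "stream_eq S a y \<longleftrightarrow> stream_eq S x y" for y
    unfolding stream_eq_def by (meson transD)
  with M show ?thesis by (simp add: node_def)
qed

lemma node_INT:
  assumes "recurrent T F (\<Inter>\<alpha>\<in>I. S \<alpha>) = (\<Inter>\<alpha>\<in>I. recurrent T F (S \<alpha>))"
  shows "node T F (\<Inter>\<alpha>\<in>I. S \<alpha>) x = (\<Inter>\<alpha>\<in>I. node T F (S \<alpha>) x)"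
  unfolding node_def assms stream_eq_INT by blast

lemma the_node_superset:
  assumes "trans S" "x \<in> recurrent T F S" "x \<in> N" "N \<subseteq> node T F S x"
  shows "\<exists>!M. M \<in> nodes T F S \<and> N \<subseteq> M"
    and "(THE M. M \<in> nodes T F S \<and> N \<subseteq> M) = node T F S x"
proof -
  have node: "node T F S x \<in> nodes T F S \<and> N \<subseteq> node T F S x"
    using assms(2,4) by (simp add: nodes_eq_image)
  have unique: "M = node T F S x" if "M \<in> nodes T F S \<and> N \<subseteq> M" for M
    using nodes_eq_node[OF assms(1)] that assms(3) by blast
  from node unique show "\<exists>!M. M \<in> nodes T F S \<and> N \<subseteq> M" by (rule ex1I)
  from node unique show "(THE M. M \<in> nodes T F S \<and> N \<subseteq> M) = node T F S x"
    by (rule the_equality)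
qed

theorem proposition27:
  fixes T :: "real set" and F :: "real \<Rightarrow> 'a::metric_space \<Rightarrow> 'a"
    and I :: "'i set" and S :: "'i \<Rightarrow> ('a \<times> 'a) set"
  assumes "semiflow T F"
    and "connected (UNIV :: 'a set)"
    and "\<forall>\<alpha>\<in>I. is_omega_stream T F (S \<alpha>)"
  shows "is_omega_stream T F (\<Inter>\<alpha>\<in>I. S \<alpha>)
    \<and> recurrent T F (\<Inter>\<alpha>\<in>I. S \<alpha>) = (\<Inter>\<alpha>\<in>I. recurrent T F (S \<alpha>))
    \<and> (\<forall>N\<in>nodes T F (\<Inter>\<alpha>\<in>I. S \<alpha>).
         (\<forall>\<alpha>\<in>I. \<exists>!M. M \<in> nodes T F (S \<alpha>) \<and> N \<subseteq> M)
         \<and> N = (\<Inter>\<alpha>\<in>I. THE M. M \<in> nodes T F (S \<alpha>) \<and> N \<subseteq> M))"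
proof (intro conjI ballI)
  let ?S = "\<Inter>\<alpha>\<in>I. S \<alpha>"
  show om: "is_omega_stream T F ?S" using is_omega_stream_INT[OF assms(3)] .
  show rec: "recurrent T F ?S = (\<Inter>\<alpha>\<in>I. recurrent T F (S \<alpha>))"
    using recurrent_INT[OF assms(1,3)] .
  fix N assume "N \<in> nodes T F ?S"
  then obtain x where x: "x \<in> recurrent T F ?S" and N: "N = node T F ?S x"
    by (auto simp: nodes_eq_image)
  have "refl ?S" using om by (simp add: is_omega_stream_def is_stream_def)
  with x N have "x \<in> N" by (simp add: self_in_node)
  have N_INT: "N = (\<Inter>\<alpha>\<in>I. node T F (S \<alpha>) x)" using N node_INT[OF rec] by simp
  have the_node: "(\<exists>!M. M \<in> nodes T F (S \<alpha>) \<and> N \<subseteq> M)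
      \<and> (THE M. M \<in> nodes T F (S \<alpha>) \<and> N \<subseteq> M) = node T F (S \<alpha>) x" if "\<alpha> \<in> I" for \<alpha>
  proof -
    have "trans (S \<alpha>)" using assms(3) that by (simp add: is_omega_stream_def is_stream_def)
    moreover have "x \<in> recurrent T F (S \<alpha>)" using x that by (simp add: rec)
    moreover have "N \<subseteq> node T F (S \<alpha>) x" using that unfolding N_INT by (rule INT_lower)
    ultimately show ?thesis using the_node_superset[OF _ _ \<open>x \<in> N\<close>] by simp
  qed
  then show "\<exists>!M. M \<in> nodes T F (S \<alpha>) \<and> N \<subseteq> M" if "\<alpha> \<in> I" for \<alpha>
    using that by blast
  have "(\<Inter>\<alpha>\<in>I. THE M. M \<in> nodes T F (S \<alpha>) \<and> N \<subseteq> M) = (\<Inter>\<alpha>\<in>I. node T F (S \<alpha>) x)"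
    using the_node by (intro INF_cong) simp_all
  with N_INT show "N = (\<Inter>\<alpha>\<in>I. THE M. M \<in> nodes T F (S \<alpha>) \<and> N \<subseteq> M)" by simp
qed

end
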